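(* For every integer $n\ge2$, $$\int_0^{1-\frac{\log n}{n}}F_n(w)\,dw\le(2+\sqrt2)\,n.$$
   Context: For $w>0$ and integer $n\ge1$ let $a_n(w)=\sum_{j=0}^n w^j$, $b_n(w)=\sum_{j=1}^n jw^j$, $c_n(w)=\sum_{j=0}^n j^2w^j$, and $$F_n(w)=\frac{1}{2\sqrt{w}}\sqrt{\frac{c_n(w)}{a_n(w)}}\sqrt{\frac{a_n(w)c_n(w)-b_n(w)^2}{w\,a_n(w)^2}}.$$ $\log$ is the natural logarithm. *)

theory Defs
  imports "HOL-Analysis.Analysis"
begin

definition a_n :: "nat \<Rightarrow> real \<Rightarrow> real" where
  "a_n n w = (\<Sum>j=0..n. w ^ j)"

definition b_n :: "nat \<Rightarrow> real \<Rightarrow> real" where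
  "b_n n w = (\<Sum>j=1..n. real j * w ^ j)"

definition c_n :: "nat \<Rightarrow> real \<Rightarrow> real" where
  "c_n n w = (\<Sum>j=0..n. (real j)^2 * w ^ j)"

definition F_n :: "nat \<Rightarrow> real \<Rightarrow> real" where
  "F_n n w = 1 / (2 * sqrt w) * sqrt (c_n n w / a_n n w)
     * sqrt ((a_n n w * c_n n w - (b_n n w)^2) / (w * (a_n n w)^2))"

end

theory Submission imports Defs begin

(* Write a, b, c for a_n n w, b_n n w, c_n n w. By Cauchy-Schwarz b^2 <= a c, so the
   integrand is at most c / (2 w a). The closed forms of the sums give (1 - w)^3 c <= 2 w
   and (1 - w) a = 1 - w^(n+1). Below T = 1 - ln n / n <= exp (- ln n / n) we have
   w^n <= 1/n <= 1/2, hence (1 - w) a >= 1/2 and the integrand is at most 2 / (1 - w)^2,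
   whose integral over [0, T] is 2 n / ln n - 2. Finally 2 / ln n <= 3 < 2 + sqrt 2
   because ln 2 >= 2/3. *)

lemma a_n_geometric: "(1 - w) * a_n n w = 1 - w ^ (n + 1)"
  using one_diff_power_eq[of w "Suc n"]
  by (simp add: a_n_def atLeast0AtMost lessThan_Suc_atMost)

lemma c_n_closed_form:
  "(1 - w) ^ 3 * c_n n w = w + w\<^sup>2 - w ^ (n + 1) * ((real n * w - real n - 1)\<^sup>2 + w)"
proof (induction n)
  case 0
  then show ?case by (simp add: c_n_def algebra_simps power2_eq_square power3_eq_cube)
next
  case (Suc n)
  have "c_n (Suc n) w = c_n n w + (real n + 1)\<^sup>2 * w ^ (n + 1)"
    by (simp add: c_n_def)
  with Suc show ?case
    by (simp add: algebra_simps power2_eq_square power3_eq_cube)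
qed

lemma a_n_ge_1: "0 \<le> w \<Longrightarrow> 1 \<le> a_n n w"
  by (induction n) (auto simp: a_n_def add_increasing2)

lemma c_n_nonneg: "0 \<le> w \<Longrightarrow> 0 \<le> c_n n w"
  unfolding c_n_def by (intro sum_nonneg) auto

lemma b_n_squared_le:
  assumes "0 \<le> w"
  shows "(b_n n w)\<^sup>2 \<le> a_n n w * c_n n w"
proof -
  have split: "real j * w ^ j = sqrt (w ^ j) * (real j * sqrt (w ^ j))" for j
    using assms by (simp add: real_sqrt_mult[symmetric])
  have "b_n n w = (\<Sum>j=0..n. real j * w ^ j)"
    by (simp add: b_n_def sum.atLeast_Suc_atMost)
  then have "(b_n n w)\<^sup>2 = (\<Sum>j=0..n. sqrt (w ^ j) * (real j * sqrt (w ^ j)))\<^sup>2"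
    by (simp only: split)
  also have "\<dots> \<le> (\<Sum>j=0..n. (sqrt (w ^ j))\<^sup>2) * (\<Sum>j=0..n. (real j * sqrt (w ^ j))\<^sup>2)"
    by (rule Cauchy_Schwarz_ineq_sum)
  also have "\<dots> = a_n n w * c_n n w"
    using assms by (simp add: a_n_def c_n_def power_mult_distrib)
  finally show ?thesis .
qed

lemma c_n_le:
  assumes "0 \<le> w" "w \<le> 1"
  shows "(1 - w) ^ 3 * c_n n w \<le> 2 * w"
proof -
  have "0 \<le> w ^ (n + 1) * ((real n * w - real n - 1)\<^sup>2 + w)"
    using assms by simp
  moreover have "w\<^sup>2 \<le> w"
    using assms by (simp add: power2_eq_square mult_left_le_one_le)
  ultimately show ?thesis
    unfolding c_n_closed_form by linarith
qed

lemma F_n_le_c_div_a: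
  assumes "0 < w"
  shows "0 \<le> F_n n w \<and> F_n n w \<le> c_n n w / (2 * w * a_n n w)"
proof -
  define a b c where "a = a_n n w" and "b = b_n n w" and "c = c_n n w"
  have a: "1 \<le> a" and c: "0 \<le> c" and disc: "b\<^sup>2 \<le> a * c"
    using assms a_n_ge_1 c_n_nonneg b_n_squared_le unfolding a_def b_def c_def by auto
  have F: "F_n n w = 1 / (2 * sqrt w) * sqrt (c / a) * sqrt ((a * c - b\<^sup>2) / (w * a\<^sup>2))"
    by (simp add: F_n_def a_def b_def c_def)
  have "sqrt ((a * c - b\<^sup>2) / (w * a\<^sup>2)) \<le> sqrt (a * c / (w * a\<^sup>2))"
    using a assms by (intro real_sqrt_le_mono divide_right_mono) auto
  then have "F_n n w \<le> 1 / (2 * sqrt w) * sqrt (c / a) * sqrt (a * c / (w * a\<^sup>2))"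
    unfolding F using a c assms by (intro mult_left_mono) auto
  also have "\<dots> = 1 / (2 * sqrt w) * sqrt ((c / a)\<^sup>2 / w)"
    using a by (simp add: real_sqrt_mult[symmetric] power2_eq_square)
  also have "\<dots> = c / (2 * w * a)"
    using a c assms by (simp add: real_sqrt_divide real_sqrt_mult field_simps)
  finally have "F_n n w \<le> c / (2 * w * a)" .
  moreover have "0 \<le> F_n n w"
    unfolding F using a c assms disc by simp
  ultimately show ?thesis
    by (simp add: a_def c_def)
qed

lemma F_n_le_inverse_square:
  assumes "0 < w" "w < 1" "1 / 2 \<le> (1 - w) * a_n n w"
  shows "F_n n w \<le> 2 / (1 - w)\<^sup>2"
proof -
  have a: "1 \<le> a_n n w"
    using assms a_n_ge_1 by simp
  have "(1 - w)\<^sup>2 * c_n n w * (1 - w) \<le> 2 * w"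
    using c_n_le[of w n] assms by (simp add: power2_eq_square power3_eq_cube algebra_simps)
  also have "\<dots> \<le> 4 * w * a_n n w * (1 - w)"
    using mult_left_mono[OF assms(3), of "4 * w"] assms by (simp add: algebra_simps)
  finally have "(1 - w)\<^sup>2 * c_n n w \<le> 4 * w * a_n n w"
    using assms by (simp add: mult_le_cancel_right)
  then have "c_n n w / (2 * w * a_n n w) \<le> 2 / (1 - w)\<^sup>2"
    using assms a by (simp add: field_simps)
  with F_n_le_c_div_a[OF assms(1), of n] show ?thesis
    by linarith
qed

lemma power_le_inverse_if_le_one_minus_ln_div:
  assumes "0 < n" "0 \<le> w" "w \<le> 1 - ln (real n) / real n"
  shows "w ^ n \<le> 1 / real n"
proof -
  have "w \<le> exp (- ln (real n) / real n)"
    using assms exp_ge_add_one_self[of "- ln (real n) / real n"] by simp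
  then have "w ^ n \<le> exp (- ln (real n) / real n) ^ n"
    using assms by (intro power_mono) auto
  also have "\<dots> = exp (real n * (- ln (real n) / real n))"
    by (rule exp_of_nat_mult[symmetric])
  also have "\<dots> = 1 / real n"
    using assms by (simp add: exp_minus inverse_eq_divide)
  finally show ?thesis .
qed

lemma F_n_bounds:
  assumes "2 \<le> n" "0 \<le> w" "w \<le> 1 - ln (real n) / real n"
  shows "0 \<le> F_n n w \<and> F_n n w \<le> 2 / (1 - w)\<^sup>2"
proof (cases "w = 0")
  case True
  (* the singular factor 1 / (2 * sqrt w) is the junk value 1 / 0 = 0 at w = 0 *)
  then show ?thesis by (simp add: F_n_def)
next
  case False
  have "0 < ln (real n) / real n"
    using assms by simp
  then have "w < 1"
    using assms by linarith
  have "w ^ (n + 1) \<le> w ^ n"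
    using assms \<open>w < 1\<close> by (simp add: mult_left_le_one_le)
  moreover have "w ^ n \<le> 1 / real n"
    using assms by (intro power_le_inverse_if_le_one_minus_ln_div) auto
  moreover have "1 / real n \<le> 1 / 2"
    using assms by simp
  ultimately have "1 / 2 \<le> (1 - w) * a_n n w"
    unfolding a_n_geometric by linarith
  then show ?thesis
    using F_n_le_c_div_a F_n_le_inverse_square False assms \<open>w < 1\<close> by auto
qed

lemma continuous_on_F_n: "continuous_on {0<..} (F_n n)"
proof -
  have "a_n n w \<noteq> 0" if "w \<in> {0<..}" for w
    using a_n_ge_1[of w n] that by auto
  then show ?thesis
    unfolding F_n_def[abs_def] a_n_def b_n_def c_n_def by (intro continuous_intros) auto
qed

lemma continuous_on_Ioc_bounded_by_integrable_imp_integrable: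
  fixes f :: "real \<Rightarrow> 'b::euclidean_space" and g :: "real \<Rightarrow> real"
  assumes "a \<le> b" "continuous_on {a<..b} f" "g integrable_on {a..b}"
    and "\<And>x. x \<in> {a<..b} \<Longrightarrow> norm (f x) \<le> g x"
  shows "f integrable_on {a..b}"
proof -
  have Icc: "{a..b} = insert a {a<..b}"
    using assms(1) by auto
  have Ioc: "{a<..b} \<in> sets lebesgue"
    by (intro sets_completionI_sets) simp
  have "f \<in> borel_measurable (lebesgue_on {a<..b})"
    using assms(2) Ioc by (rule continuous_imp_measurable_on_sets_lebesgue)
  moreover have "g integrable_on {a<..b}"
    using assms(3) unfolding Icc integrable_on_insert_iff .
  ultimately have "f integrable_on {a<..b}"
    using assms(4) Ioc by (rule measurable_bounded_by_integrable_imp_integrable)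
  then show ?thesis
    unfolding Icc integrable_on_insert_iff .
qed

lemma has_integral_two_div_one_minus_square:
  fixes a b :: real
  assumes "a \<le> b" "b < 1"
  shows "((\<lambda>w. 2 / (1 - w)\<^sup>2) has_integral 2 / (1 - b) - 2 / (1 - a)) {a..b}"
proof (rule fundamental_theorem_of_calculus)
  fix x assume "x \<in> {a..b}"
  then have "x < 1"
    using assms by simp
  then show "((\<lambda>w. 2 / (1 - w)) has_vector_derivative 2 / (1 - x)\<^sup>2) (at x within {a..b})"
    unfolding has_real_derivative_iff_has_vector_derivative[symmetric]
    by (auto intro!: derivative_eq_intros simp: power2_eq_square)
qed (use assms in simp)

theorem lemma3p6:
  fixes n :: nat
  assumes "n \<ge> 2"
  shows "F_n n integrable_on {0..1 - ln (real n) / real n} \<and>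
         integral {0..1 - ln (real n) / real n} (F_n n) \<le> (2 + sqrt 2) * real n"
proof -
  define L where "L = ln (real n)"
  define T where "T = 1 - L / real n"
  have "ln 2 \<le> L"
    using assms unfolding L_def by simp
  then have "2 / 3 \<le> L"
    using ln2_ge_two_thirds by linarith
  moreover have "L < real n"
    using assms ln_less_self[of "real n"] unfolding L_def by simp
  ultimately have "0 \<le> T" "T < 1"
    unfolding T_def using assms by (auto simp: field_simps)
  have bounds: "0 \<le> F_n n w \<and> F_n n w \<le> 2 / (1 - w)\<^sup>2" if "w \<in> {0..T}" for w
    using F_n_bounds assms that unfolding T_def L_def by auto
  have "2 / (1 - T) - 2 / (1 - 0) = 2 * real n / L - 2"
    using \<open>2 / 3 \<le> L\<close> unfolding T_def by simp
  then have g: "((\<lambda>w. 2 / (1 - w)\<^sup>2) has_integral 2 * real n / L - 2) {0..T}"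
    using has_integral_two_div_one_minus_square[OF \<open>0 \<le> T\<close> \<open>T < 1\<close>] by simp
  have int: "F_n n integrable_on {0..T}"
  proof (rule continuous_on_Ioc_bounded_by_integrable_imp_integrable)
    show "continuous_on {0<..T} (F_n n)"
      using continuous_on_F_n by (rule continuous_on_subset) auto
    show "norm (F_n n w) \<le> 2 / (1 - w)\<^sup>2" if "w \<in> {0<..T}" for w
      using bounds[of w] that by simp
  qed (use \<open>0 \<le> T\<close> g in \<open>auto intro: has_integral_integrable\<close>)
  have "integral {0..T} (F_n n) \<le> 2 * real n / L - 2"
    using integral_le[OF int has_integral_integrable[OF g]] bounds integral_unique[OF g] by auto
  also have "\<dots> \<le> 2 * real n / L"
    by simp
  also have "\<dots> \<le> 3 * real n"
    using mult_right_mono[OF \<open>2 / 3 \<le> L\<close>, of "real n"] \<open>2 / 3 \<le> L\<close> by (simp add: pos_divide_le_eq mult_ac)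
  also have "\<dots> \<le> (2 + sqrt 2) * real n"
    by (intro mult_right_mono) auto
  finally show ?thesis
    using int unfolding T_def L_def by simp
qed

end
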